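(* For every $n\ge1$ and every $\sigma\in S_n$, $$\mathrm{lsg(op)}(\sigma)+\mathrm{rsg(op)}(\sigma)=\mathrm{lsg(clos)}(\sigma)+\mathrm{rsg(clos)}(\sigma).$$
   Context: A permutation $\sigma\in S_n$ is written as the word $\sigma(1)\cdots\sigma(n)$; its runs are the maximal contiguous increasing segments. A run of length $\ge2$ is proper. $\mathrm{op}(\sigma)$ is the set of first elements of proper runs, $\mathrm{clos}(\sigma)$ the set of last elements of proper runs. For $i\in\{1,\dots,n\}$, $\mathrm{lsg}(i)$ is the number of runs lying strictly to the left of $i$ (not containing $i$) that contain both an element smaller and an element greater than $i$; $\mathrm{rsg}(i)$ is the analogous number to the right. $\mathrm{lsg}(X)(\sigma)=\sum_{i\in X(\sigma)}\mathrm{lsg}(i)$, $\mathrm{rsg}(X)(\sigma)=\sum_{i\in X(\sigma)}\mathrm{rsg}(i)$ for $X\in\{\mathrm{op},\mathrm{clos}\}$. *)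

theory Defs
  imports "HOL-Combinatorics.Permutations"
begin

(* A permutation sigma of {1..n} (sigma permutes {1..n}); its word is sigma 1 ... sigma n.
   A run is given by its interval of positions {a..b}: a maximal contiguous increasing segment. *)
definition is_run :: "(nat \<Rightarrow> nat) \<Rightarrow> nat \<Rightarrow> nat \<Rightarrow> nat \<Rightarrow> bool" where
  "is_run \<sigma> n a b \<longleftrightarrow> 1 \<le> a \<and> a \<le> b \<and> b \<le> n
     \<and> (\<forall>p. a \<le> p \<and> p < b \<longrightarrow> \<sigma> p < \<sigma> (Suc p))
     \<and> (a = 1 \<or> \<sigma> (a - 1) > \<sigma> a)
     \<and> (b = n \<or> \<sigma> b > \<sigma> (Suc b))"

definition op_set :: "(nat \<Rightarrow> nat) \<Rightarrow> nat \<Rightarrow> nat set" where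
  "op_set \<sigma> n = {\<sigma> a | a b. is_run \<sigma> n a b \<and> a < b}"

definition clos_set :: "(nat \<Rightarrow> nat) \<Rightarrow> nat \<Rightarrow> nat set" where
  "clos_set \<sigma> n = {\<sigma> b | a b. is_run \<sigma> n a b \<and> a < b}"

definition straddles :: "(nat \<Rightarrow> nat) \<Rightarrow> nat \<Rightarrow> nat \<Rightarrow> nat \<Rightarrow> bool" where
  "straddles \<sigma> a b i \<longleftrightarrow> (\<exists>p\<in>{a..b}. \<sigma> p < i) \<and> (\<exists>q\<in>{a..b}. i < \<sigma> q)"

definition lsg :: "(nat \<Rightarrow> nat) \<Rightarrow> nat \<Rightarrow> nat \<Rightarrow> nat" where
  "lsg \<sigma> n i = card {(a, b). is_run \<sigma> n a b \<and> b < inv \<sigma> i \<and> straddles \<sigma> a b i}"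

definition rsg :: "(nat \<Rightarrow> nat) \<Rightarrow> nat \<Rightarrow> nat \<Rightarrow> nat" where
  "rsg \<sigma> n i = card {(a, b). is_run \<sigma> n a b \<and> inv \<sigma> i < a \<and> straddles \<sigma> a b i}"

end

theory Submission
  imports Defs
begin

text \<open>
  If \<open>i\<close> is an endpoint of its own run, that run cannot straddle \<open>i\<close>, so
  \<open>lsg(i) + rsg(i)\<close> is the number of runs \<open>r\<close> with \<open>min r < i < max r\<close>.  Both sides of the
  identity therefore count pairs \<open>(s, r)\<close> of runs, \<open>s\<close> proper, such that the first (resp. last)
  element of \<open>s\<close> lies strictly inside the value interval \<open>[min r, max r]\<close>.  Pairs whose value
  intervals are nested are counted on both sides; the remaining pairs are crossing intervals, and
  swapping \<open>s\<close> and \<open>r\<close> exchanges the crossings counted on the left with those counted on the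
  right.  The endpoints of distinct runs are distinct values because \<open>\<sigma>\<close> is injective.
\<close>

lemma sum_card_covering_lo_eq_sum_card_covering_hi:
  fixes lo hi :: "'a \<Rightarrow> 'b::linorder"
  assumes "finite P" and lo_inj: "inj_on lo P" and hi_inj: "inj_on hi P"
  defines "Q \<equiv> {s\<in>P. lo s < hi s}"
  shows "(\<Sum>s\<in>Q. card {r\<in>P. lo r < lo s \<and> lo s < hi r})
       = (\<Sum>s\<in>Q. card {r\<in>P. lo r < hi s \<and> hi s < hi r})"
proof -
  define nested where "nested = {(s, r) \<in> Q \<times> P. lo r < lo s \<and> hi s < hi r}"
  define crossing where "crossing = {(s, r) \<in> P \<times> P. lo r < lo s \<and> lo s < hi r \<and> hi r < hi s}"
  have fin: "finite nested" "finite crossing"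
    using \<open>finite P\<close> by (auto simp: nested_def crossing_def Q_def intro: finite_subset[of _ "P \<times> P"])
  have disj: "nested \<inter> crossing = {}" "nested \<inter> prod.swap ` crossing = {}"
    by (auto simp: nested_def crossing_def)
  have finite_Q: "finite Q"
    using \<open>finite P\<close> by (simp add: Q_def)
  have left: "Sigma Q (\<lambda>s. {r\<in>P. lo r < lo s \<and> lo s < hi r}) = nested \<union> crossing"
    using hi_inj by (auto simp: nested_def crossing_def Q_def dest: less_trans)
      (metis inj_onD less_irrefl linorder_neqE)
  have right: "Sigma Q (\<lambda>s. {r\<in>P. lo r < hi s \<and> hi s < hi r}) = nested \<union> prod.swap ` crossing"
    using lo_inj by (auto simp: nested_def crossing_def Q_def dest: less_trans)
      (metis inj_onD less_irrefl linorder_neqE)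
  have "(\<Sum>s\<in>Q. card {r\<in>P. lo r < lo s \<and> lo s < hi r}) = card (nested \<union> crossing)"
    using finite_Q \<open>finite P\<close> by (simp flip: left)
  also have "\<dots> = card (nested \<union> prod.swap ` crossing)"
    using fin disj by (simp add: card_Un_disjoint card_image)
  also have "\<dots> = (\<Sum>s\<in>Q. card {r\<in>P. lo r < hi s \<and> hi s < hi r})"
    using finite_Q \<open>finite P\<close> by (simp flip: right)
  finally show ?thesis .
qed

definition runs :: "(nat \<Rightarrow> nat) \<Rightarrow> nat \<Rightarrow> (nat \<times> nat) set" where
  "runs \<sigma> n = {(a, b). is_run \<sigma> n a b}"

definition proper_runs :: "(nat \<Rightarrow> nat) \<Rightarrow> nat \<Rightarrow> (nat \<times> nat) set" where
  "proper_runs \<sigma> n = {(a, b). is_run \<sigma> n a b \<and> a < b}"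

lemma finite_runs: "finite (runs \<sigma> n)"
  by (rule finite_subset[of _ "{1..n} \<times> {1..n}"]) (auto simp: runs_def is_run_def)

lemma is_run_start_le_end: "is_run \<sigma> n a b \<Longrightarrow> a \<le> b"
  by (simp add: is_run_def)

lemma is_run_strict_mono_on:
  assumes "is_run \<sigma> n a b"
  shows "strict_mono_on {a..b} \<sigma>"
proof (rule strict_mono_onI)
  have step: "\<sigma> k < \<sigma> (Suc k)" if "k \<in> {a..<b}" for k
    using assms that by (simp add: is_run_def)
  fix p q assume "p \<in> {a..b}" "q \<in> {a..b}" "p < q"
  then show "\<sigma> p < \<sigma> q"
    using lift_Suc_mono_less_ivl[of "{a..<b}" \<sigma> p q] step by force
qed

lemma straddles_run_iff:
  assumes "is_run \<sigma> n a b"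
  shows "straddles \<sigma> a b i \<longleftrightarrow> \<sigma> a < i \<and> i < \<sigma> b"
proof
  have bounds: "\<sigma> a \<le> \<sigma> p \<and> \<sigma> p \<le> \<sigma> b" if "p \<in> {a..b}" for p
    using strict_mono_on_leD[OF is_run_strict_mono_on[OF assms]] that is_run_start_le_end[OF assms]
    by auto
  assume "straddles \<sigma> a b i"
  then obtain p q where "p \<in> {a..b}" "\<sigma> p < i" "q \<in> {a..b}" "i < \<sigma> q"
    unfolding straddles_def by blast
  then show "\<sigma> a < i \<and> i < \<sigma> b"
    using bounds[of p] bounds[of q] by linarith
next
  assume "\<sigma> a < i \<and> i < \<sigma> b"
  moreover have "a \<in> {a..b}" "b \<in> {a..b}"
    using is_run_start_le_end[OF assms] by simp_all
  ultimately show "straddles \<sigma> a b i"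
    unfolding straddles_def by blast
qed

lemma runs_disjoint:
  assumes "is_run \<sigma> n a b" "is_run \<sigma> n a' b'" "(a, b) \<noteq> (a', b')"
  shows "b < a' \<or> b' < a"
proof -
  have later_start: "b < a'" if "is_run \<sigma> n a b" "is_run \<sigma> n a' b'" "a < a'" for a b a' b'
  proof (rule ccontr)
    assume "\<not> b < a'"
    then have "a' - 1 \<in> {a..b}" "a' \<in> {a..b}" "a' - 1 < a'"
      using that(1,3) by (auto simp: is_run_def)
    then have "\<sigma> (a' - 1) < \<sigma> a'"
      using is_run_strict_mono_on[OF that(1)] by (simp add: strict_mono_onD)
    moreover have "a' \<noteq> 1"
      using that(1,3) by (simp add: is_run_def)
    ultimately show False
      using that(2) by (simp add: is_run_def)
  qed
  have later_end: "b < a'" if "is_run \<sigma> n a b" "is_run \<sigma> n a' b'" "b < b'" for a b a' b'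
  proof (rule ccontr)
    assume "\<not> b < a'"
    then have "b \<in> {a'..b'}" "Suc b \<in> {a'..b'}"
      using that(2,3) by (auto simp: is_run_def)
    then have "\<sigma> b < \<sigma> (Suc b)"
      using is_run_strict_mono_on[OF that(2)] by (simp add: strict_mono_onD)
    moreover have "b \<noteq> n"
      using that(2,3) by (simp add: is_run_def)
    ultimately show False
      using that(1) by (simp add: is_run_def)
  qed
  show ?thesis
  proof (cases a a' rule: linorder_cases)
    case less
    then show ?thesis using later_start[OF assms(1,2)] by simp
  next
    case greater
    then show ?thesis using later_start[OF assms(2,1)] by simp
  next
    case equal
    then have "b < b' \<or> b' < b"
      using assms(3) by auto
    then show ?thesis
      using later_end[OF assms(1,2)] later_end[OF assms(2,1)] by auto
  qed
qed

lemma is_run_unique_end: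
  assumes "is_run \<sigma> n a b" "is_run \<sigma> n a b'"
  shows "b = b'"
proof (rule ccontr)
  assume "b \<noteq> b'"
  then have "b < a \<or> b' < a"
    using runs_disjoint[OF assms] by simp
  then show False
    using is_run_start_le_end[OF assms(1)] is_run_start_le_end[OF assms(2)] by linarith
qed

lemma is_run_unique_start:
  assumes "is_run \<sigma> n a b" "is_run \<sigma> n a' b"
  shows "a = a'"
proof (rule ccontr)
  assume "a \<noteq> a'"
  then have "b < a' \<or> b < a"
    using runs_disjoint[OF assms] by simp
  then show False
    using is_run_start_le_end[OF assms(1)] is_run_start_le_end[OF assms(2)] by linarith
qed

lemma inj_on_run_start:
  assumes "inj \<sigma>"
  shows "inj_on (\<lambda>s. \<sigma> (fst s)) (runs \<sigma> n)"
  using is_run_unique_end injD[OF assms] by (fastforce simp: inj_on_def runs_def)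

lemma inj_on_run_end:
  assumes "inj \<sigma>"
  shows "inj_on (\<lambda>s. \<sigma> (snd s)) (runs \<sigma> n)"
  using is_run_unique_start injD[OF assms] by (fastforce simp: inj_on_def runs_def)

lemma proper_runs_eq: "proper_runs \<sigma> n = {s \<in> runs \<sigma> n. \<sigma> (fst s) < \<sigma> (snd s)}"
proof -
  have "\<sigma> a < \<sigma> b \<longleftrightarrow> a < b" if "is_run \<sigma> n a b" for a b
    using strict_mono_on_less[OF is_run_strict_mono_on[OF that]] that by (simp add: is_run_def)
  then show ?thesis
    unfolding proper_runs_def runs_def by auto
qed

lemma op_set_eq_image: "op_set \<sigma> n = (\<lambda>s. \<sigma> (fst s)) ` proper_runs \<sigma> n"
  by (force simp: op_set_def proper_runs_def)

lemma clos_set_eq_image: "clos_set \<sigma> n = (\<lambda>s. \<sigma> (snd s)) ` proper_runs \<sigma> n"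
  by (force simp: clos_set_def proper_runs_def)

lemma lsg_plus_rsg:
  assumes "inj \<sigma>"
  shows "lsg \<sigma> n (\<sigma> p) + rsg \<sigma> n (\<sigma> p)
       = card {(a, b). is_run \<sigma> n a b \<and> (b < p \<or> p < a) \<and> straddles \<sigma> a b (\<sigma> p)}"
proof -
  define L where "L = {(a, b). is_run \<sigma> n a b \<and> b < p \<and> straddles \<sigma> a b (\<sigma> p)}"
  define R where "R = {(a, b). is_run \<sigma> n a b \<and> p < a \<and> straddles \<sigma> a b (\<sigma> p)}"
  have "finite L"
    by (rule finite_subset[OF _ finite_runs[of \<sigma> n]]) (auto simp: L_def runs_def)
  moreover have "finite R"
    by (rule finite_subset[OF _ finite_runs[of \<sigma> n]]) (auto simp: R_def runs_def)
  moreover have "L \<inter> R = {}"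
    using is_run_start_le_end by (fastforce simp: L_def R_def)
  moreover have "L \<union> R = {(a, b). is_run \<sigma> n a b \<and> (b < p \<or> p < a) \<and> straddles \<sigma> a b (\<sigma> p)}"
    by (auto simp: L_def R_def)
  ultimately show ?thesis
    using assms by (simp add: lsg_def rsg_def inv_f_f flip: L_def R_def card_Un_disjoint)
qed

lemma lsg_plus_rsg_run_endpoint:
  assumes "inj \<sigma>" "s \<in> runs \<sigma> n" "p = fst s \<or> p = snd s"
  shows "lsg \<sigma> n (\<sigma> p) + rsg \<sigma> n (\<sigma> p)
       = card {r \<in> runs \<sigma> n. \<sigma> (fst r) < \<sigma> p \<and> \<sigma> p < \<sigma> (snd r)}"
proof -
  obtain a0 b0 where s: "s = (a0, b0)"
    by fastforce
  have not_inside: "b < p \<or> p < a" if "is_run \<sigma> n a b" "\<sigma> a < \<sigma> p" "\<sigma> p < \<sigma> b" for a b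
  proof -
    have "(a, b) \<noteq> (a0, b0)"
      using assms(3) that(2,3) s by auto
    then have "b < a0 \<or> b0 < a"
      using runs_disjoint that(1) assms(2) s by (simp add: runs_def)
    then show ?thesis
      using assms(2,3) s is_run_start_le_end by (fastforce simp: runs_def)
  qed
  have "is_run \<sigma> n a b \<and> (b < p \<or> p < a) \<and> straddles \<sigma> a b (\<sigma> p)
      \<longleftrightarrow> (a, b) \<in> runs \<sigma> n \<and> \<sigma> a < \<sigma> p \<and> \<sigma> p < \<sigma> b" for a b
    using straddles_run_iff[of \<sigma> n a b] not_inside[of a b] by (auto simp: runs_def)
  then show ?thesis
    unfolding lsg_plus_rsg[OF assms(1)] by (intro arg_cong[where f = card]) auto
qed

theorem mainTheorem6:
  fixes n :: nat and \<sigma> :: "nat \<Rightarrow> nat"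
  assumes "n \<ge> 1" and "\<sigma> permutes {1..n}"
  shows "(\<Sum>i\<in>op_set \<sigma> n. lsg \<sigma> n i) + (\<Sum>i\<in>op_set \<sigma> n. rsg \<sigma> n i)
       = (\<Sum>i\<in>clos_set \<sigma> n. lsg \<sigma> n i) + (\<Sum>i\<in>clos_set \<sigma> n. rsg \<sigma> n i)"
proof -
  have inj: "inj \<sigma>"
    using assms(2) by (rule permutes_inj)
  have proper_runs_subset: "proper_runs \<sigma> n \<subseteq> runs \<sigma> n"
    by (auto simp: proper_runs_eq)
  have "(\<Sum>i\<in>op_set \<sigma> n. lsg \<sigma> n i) + (\<Sum>i\<in>op_set \<sigma> n. rsg \<sigma> n i)
      = (\<Sum>s\<in>proper_runs \<sigma> n. lsg \<sigma> n (\<sigma> (fst s)) + rsg \<sigma> n (\<sigma> (fst s)))"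
    using inj_on_subset[OF inj_on_run_start[OF inj] proper_runs_subset]
    by (simp add: op_set_eq_image sum.distrib sum.reindex)
  also have "\<dots> = (\<Sum>s\<in>proper_runs \<sigma> n.
      card {r \<in> runs \<sigma> n. \<sigma> (fst r) < \<sigma> (fst s) \<and> \<sigma> (fst s) < \<sigma> (snd r)})"
    using proper_runs_subset by (intro sum.cong refl lsg_plus_rsg_run_endpoint[OF inj]) auto
  also have "\<dots> = (\<Sum>s\<in>proper_runs \<sigma> n.
      card {r \<in> runs \<sigma> n. \<sigma> (fst r) < \<sigma> (snd s) \<and> \<sigma> (snd s) < \<sigma> (snd r)})"
    unfolding proper_runs_eq
    by (rule sum_card_covering_lo_eq_sum_card_covering_hi[OF finite_runs inj_on_run_start[OF inj]
          inj_on_run_end[OF inj]])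
  also have "\<dots> = (\<Sum>s\<in>proper_runs \<sigma> n. lsg \<sigma> n (\<sigma> (snd s)) + rsg \<sigma> n (\<sigma> (snd s)))"
    using proper_runs_subset by (intro sum.cong refl lsg_plus_rsg_run_endpoint[OF inj, symmetric]) auto
  also have "\<dots> = (\<Sum>i\<in>clos_set \<sigma> n. lsg \<sigma> n i) + (\<Sum>i\<in>clos_set \<sigma> n. rsg \<sigma> n i)"
    using inj_on_subset[OF inj_on_run_end[OF inj] proper_runs_subset]
    by (simp add: clos_set_eq_image sum.distrib sum.reindex)
  finally show ?thesis .
qed

end
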